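(* Let $A$ be a real $m\times m$ matrix, $f$ in the range of $A$, $y$ the minimal-norm solution of $Ay=f$. Fix $q\in(0,1)$, $C>1$, $\varepsilon\in(0,1)$. For each $\delta\in(0,1)$ let $f_\delta\in\mathbb{R}^m$ with $\|f_\delta-f\|\le\delta$, and let $n_\delta$ be the smallest integer $n\ge1$ with $\|AT_{q^{n}}^{-1}A^*f_\delta-f_\delta\|\le C\delta^\varepsilon$. Then $$\lim_{\delta\to0}\frac{\delta}{\sqrt{q^{n_\delta}}}=0.$$
   Context: $A^*$ is the transpose of $A$, $T:=A^*A$, $T_a:=T+aI$ for $a>0$; $\|\cdot\|$ is the Euclidean norm. *)

theory Defs
  imports "HOL-Analysis.Analysis"
begin

definition Tmat :: "real^'m^'m \<Rightarrow> real \<Rightarrow> real^'m^'m" where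
  "Tmat A a = transpose A ** A + a *\<^sub>R mat 1"

definition resid :: "real^'m^'m \<Rightarrow> real \<Rightarrow> real^'m \<Rightarrow> real^'m" where
  "resid A a g = A *v (matrix_inv (Tmat A a) *v (transpose A *v g)) - g"

definition stop_index :: "real^'m^'m \<Rightarrow> real \<Rightarrow> real \<Rightarrow> real \<Rightarrow> real \<Rightarrow> real^'m \<Rightarrow> nat" where
  "stop_index A q C \<epsilon> \<delta> g = (LEAST n::nat. 1 \<le> n \<and> norm (resid A (q ^ n) g) \<le> C * \<delta> powr \<epsilon>)"

end

theory Submission
  imports Defs
begin

text \<open>
  For \<open>a > 0\<close> the operator \<open>T\<^sub>a = A\<^sup>*A + aI\<close> is positive definite, hence invertible, and the
  residual \<open>r = A T\<^sub>a\<^sup>-\<^sup>1 A\<^sup>* g - g\<close> satisfies \<open>A\<^sup>* r = -a T\<^sub>a\<^sup>-\<^sup>1 A\<^sup>* g\<close>, whence the energy identity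
  \<open>a\<parallel>r\<parallel>\<^sup>2 + \<parallel>A\<^sup>*r\<parallel>\<^sup>2 = -a\<langle>r,g\<rangle>\<close>.  It yields \<open>\<parallel>r\<parallel> \<le> \<parallel>g\<parallel>\<close> in general and
  \<open>\<parallel>r\<parallel> \<le> \<surd>a \<parallel>y\<parallel>/2\<close> for \<open>g = Ay\<close>; by linearity \<open>\<parallel>r\<parallel> \<le> \<surd>a\<parallel>y\<parallel>/2 + \<parallel>g - Ay\<parallel>\<close>.
  If the stopping index \<open>N = n\<^sub>\<delta>\<close> is at least 2, the test failed at \<open>N - 1\<close>, so
  \<open>C\<delta>\<^sup>\<epsilon> < \<surd>(q\<^sup>N\<^sup>-\<^sup>1) \<parallel>y\<parallel>/2 + \<delta>\<close>; writing \<open>\<delta> = \<delta>\<^sup>\<epsilon> \<delta>\<^sup>1\<^sup>-\<^sup>\<epsilon>\<close> this rearranges to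
  \<open>\<delta>/\<surd>(q\<^sup>N) \<le> (\<delta> + \<parallel>y\<parallel>/2 \<cdot> \<delta>\<^sup>1\<^sup>-\<^sup>\<epsilon>/(C - \<delta>\<^sup>1\<^sup>-\<^sup>\<epsilon>))/\<surd>q\<close>, a bound that also covers
  \<open>N \<le> 1\<close> and tends to 0 as \<open>\<delta> \<rightarrow> 0\<close>.  The theorem follows by a sandwich argument.
\<close>

lemma transpose_adjoint:
  fixes A :: "real^'n^'m"
  shows "(A *v x) \<bullet> y = x \<bullet> (transpose A *v y)"
  by (metis dot_lmul_matrix inner_commute transpose_matrix_vector)

lemma matrix_inv_right:
  fixes M :: "'a::field^'n^'n"
  assumes "invertible M"
  shows "M ** matrix_inv M = mat 1"
proof -
  obtain B where "M ** B = mat 1 \<and> B ** M = mat 1"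
    using assms unfolding invertible_def by blast
  then show ?thesis
    unfolding matrix_inv_def by (rule someI2) auto
qed

lemma Tmat_apply: "Tmat A a *v x = transpose A *v (A *v x) + a *\<^sub>R x"
  by (simp add: Tmat_def matrix_vector_mult_add_rdistrib matrix_vector_mul_assoc
      flip: scaleR_matrix_vector_assoc)

text \<open>\<open>T\<^sub>a\<close> is positive definite, \<open>\<langle>x, T\<^sub>a x\<rangle> = \<parallel>Ax\<parallel>\<^sup>2 + a\<parallel>x\<parallel>\<^sup>2\<close>, hence invertible for \<open>a > 0\<close>.\<close>
lemma Tmat_invertible:
  fixes A :: "real^'m^'m"
  assumes a: "a > 0"
  shows "invertible (Tmat A a)"
proof -
  have "x = 0" if "Tmat A a *v x = 0" for x
  proof -
    have "(A *v x) \<bullet> (A *v x) + a * (x \<bullet> x) = x \<bullet> (Tmat A a *v x)"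
      by (simp add: Tmat_apply inner_add_right transpose_adjoint)
    then have "(A *v x) \<bullet> (A *v x) + a * (x \<bullet> x) = 0"
      using that by simp
    with a have "x \<bullet> x = 0"
      by (smt (verit) inner_ge_zero mult_pos_pos)
    then show "x = 0" by simp
  qed
  then show ?thesis
    using matrix_left_invertible_ker invertible_left_inverse by blast
qed

lemma tikhonov_normal_equation:
  fixes A :: "real^'m^'m" and g :: "real^'m"
  assumes "a > 0"
  defines "x \<equiv> matrix_inv (Tmat A a) *v (transpose A *v g)"
  shows "transpose A *v (A *v x) + a *\<^sub>R x = transpose A *v g"
proof -
  have "Tmat A a *v x = transpose A *v g"
    using matrix_inv_right[OF Tmat_invertible[OF assms(1), of A]]
    by (simp add: x_def matrix_vector_mul_assoc)
  then show ?thesis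
    by (simp only: Tmat_apply)
qed

lemma resid_energy:
  fixes A :: "real^'m^'m" and g :: "real^'m"
  assumes "a > 0"
  defines "r \<equiv> resid A a g"
  shows "a * norm r ^ 2 + norm (transpose A *v r) ^ 2 = - a * (r \<bullet> g)"
proof -
  define x where "x = matrix_inv (Tmat A a) *v (transpose A *v g)"
  have r: "r = A *v x - g"
    by (simp add: r_def resid_def x_def)
  have At: "transpose A *v r = - a *\<^sub>R x"
    using tikhonov_normal_equation[OF assms(1), of A g]
    by (simp add: r x_def matrix_vector_mult_diff_distrib algebra_simps)
  have "norm (transpose A *v r) ^ 2 = (transpose A *v r) \<bullet> (- a *\<^sub>R x)"
    by (simp only: power2_norm_eq_inner At)
  also have "\<dots> = - a * (x \<bullet> (transpose A *v r))"
    by (simp add: inner_commute)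
  also have "x \<bullet> (transpose A *v r) = (A *v x) \<bullet> r"
    by (rule transpose_adjoint[symmetric])
  also have "(A *v x) \<bullet> r = r \<bullet> r + r \<bullet> g"
    by (simp add: r inner_diff_right inner_diff_left inner_commute)
  finally show ?thesis
    by (simp add: power2_norm_eq_inner algebra_simps)
qed

lemma resid_norm_le:
  fixes A :: "real^'m^'m"
  assumes a: "a > 0"
  shows "norm (resid A a g) \<le> norm g"
proof -
  let ?r = "resid A a g"
  have "a * norm ?r ^ 2 \<le> - a * (?r \<bullet> g)"
    using resid_energy[OF a, of A g] by (smt (verit) zero_le_power2)
  also have "\<dots> \<le> a * (norm ?r * norm g)"
    using mult_left_mono[OF abs_le_D2[OF Cauchy_Schwarz_ineq2[of ?r g]], of a] a by simp
  finally have "norm ?r * norm ?r \<le> norm ?r * norm g"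
    using a by (simp add: power2_eq_square)
  then show ?thesis
    by (smt (verit) mult_le_cancel_left norm_ge_zero)
qed

text \<open>For exact data in the range, \<open>\<parallel>A T\<^sub>a\<^sup>-\<^sup>1 A\<^sup>* A y - A y\<parallel> \<le> \<surd>a \<parallel>y\<parallel>/2\<close>: by the energy
  identity, \<open>a\<parallel>r\<parallel>\<^sup>2 \<le> a s\<parallel>y\<parallel> - s\<^sup>2 \<le> a\<^sup>2\<parallel>y\<parallel>\<^sup>2/4\<close> with \<open>s = \<parallel>A\<^sup>*r\<parallel>\<close>.\<close>
lemma resid_range_le:
  fixes A :: "real^'m^'m"
  assumes a: "a > 0"
  shows "norm (resid A a (A *v y)) \<le> sqrt a * norm y / 2"
proof -
  let ?r = "resid A a (A *v y)"
  let ?s = "norm (transpose A *v ?r)"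
  have "a * norm ?r ^ 2 + ?s ^ 2 = - a * ((transpose A *v ?r) \<bullet> y)"
    using resid_energy[OF a, of A "A *v y"] by (simp add: transpose_adjoint inner_commute)
  also have "\<dots> \<le> a * (?s * norm y)"
    using mult_left_mono[OF abs_le_D2[OF Cauchy_Schwarz_ineq2[of "transpose A *v ?r" y]], of a] a
    by simp
  finally have "a * norm ?r ^ 2 \<le> a * (?s * norm y) - ?s ^ 2" by simp
  also have "\<dots> = a * (a * norm y ^ 2 / 4) - (a * norm y / 2 - ?s) ^ 2"
    by (simp add: power2_eq_square field_simps)
  also have "\<dots> \<le> a * (a * norm y ^ 2 / 4)"
    by simp
  finally have "norm ?r ^ 2 \<le> (sqrt a * norm y / 2) ^ 2"
    using a by (simp add: power_mult_distrib power_divide)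
  then show ?thesis
    by (rule power2_le_imp_le) (use a in auto)
qed

lemma resid_diff: "resid A a g - resid A a h = resid A a (g - h)"
  by (simp add: resid_def matrix_vector_mult_diff_distrib algebra_simps)

lemma resid_perturbed_le:
  fixes A :: "real^'m^'m"
  assumes "a > 0"
  shows "norm (resid A a g) \<le> sqrt a * norm y / 2 + norm (g - A *v y)"
proof -
  have "resid A a g = resid A a (A *v y) + resid A a (g - A *v y)"
    using resid_diff[of A a g "A *v y"] by (simp add: algebra_simps)
  then have "norm (resid A a g) \<le> norm (resid A a (A *v y)) + norm (resid A a (g - A *v y))"
    by (metis norm_triangle_ineq)
  then show ?thesis
    using resid_range_le[OF assms, of A y] resid_norm_le[OF assms, of A "g - A *v y"]
    by linarith
qed

lemma stop_index_test_fails: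
  assumes "1 \<le> k" "k < stop_index A q C \<epsilon> \<delta> g"
  shows "C * \<delta> powr \<epsilon> < norm (resid A (q ^ k) g)"
  using not_less_Least[OF assms(2)[unfolded stop_index_def]] assms(1) by auto

text \<open>Rearranging a failed test \<open>C\<delta>\<^sup>\<epsilon> < sK + \<delta>\<close> with \<open>P = \<delta>\<^sup>1\<^sup>-\<^sup>\<epsilon>\<close>: since
  \<open>\<delta>(C - P) = P(C\<delta>\<^sup>\<epsilon> - \<delta>)\<close>, one gets \<open>\<delta>/s < KP/(C - P)\<close>.\<close>
lemma failed_test_ratio_bound:
  fixes \<delta> \<epsilon> C K s :: real
  assumes "0 < \<delta>" "0 < s" "\<delta> powr (1 - \<epsilon>) < C"
    and fail: "C * \<delta> powr \<epsilon> < s * K + \<delta>"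
  shows "\<delta> / s < K * (\<delta> powr (1 - \<epsilon>) / (C - \<delta> powr (1 - \<epsilon>)))"
proof -
  define P where "P = \<delta> powr (1 - \<epsilon>)"
  have split: "\<delta> = \<delta> powr \<epsilon> * P"
    using assms(1) by (simp add: P_def flip: powr_add)
  have "\<delta> * (C - P) = P * (C * \<delta> powr \<epsilon> - \<delta>)"
    by (subst (1 3) split) (simp add: algebra_simps)
  also have "\<dots> < P * (s * K)"
    using fail assms(1) by (intro mult_strict_left_mono) (auto simp: P_def)
  finally show ?thesis
    using assms(2,3) by (simp add: P_def field_simps)
qed

lemma stop_index_scale_bound:
  fixes A :: "real^'m^'m"
  assumes q: "0 < q" "q < 1" and \<delta>: "0 < \<delta>"
    and P: "\<delta> powr (1 - \<epsilon>) < C"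
    and err: "norm (g - A *v y) \<le> \<delta>"
  defines "N \<equiv> stop_index A q C \<epsilon> \<delta> g"
  shows "\<delta> / sqrt (q ^ N) \<le>
    (\<delta> + norm y / 2 * (\<delta> powr (1 - \<epsilon>) / (C - \<delta> powr (1 - \<epsilon>)))) / sqrt q"
    (is "_ \<le> (_ + ?B) / _")
proof (cases "N \<le> 1")
  case True
  then have "sqrt q \<le> sqrt (q ^ N)"
    using q by (cases N) auto
  then have "\<delta> / sqrt (q ^ N) \<le> \<delta> / sqrt q"
    using \<delta> q by (intro divide_left_mono) auto
  also have "\<dots> \<le> (\<delta> + ?B) / sqrt q"
    using P q by (intro divide_right_mono) auto
  finally show ?thesis .
next
  case False
  define s where "s = sqrt (q ^ (N - 1))"
  have s: "0 < s" using q by (simp add: s_def)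
  have "q ^ N = q * q ^ (N - 1)"
    using False by (cases N) auto
  then have sqrt_N: "sqrt (q ^ N) = sqrt q * s"
    by (simp add: s_def real_sqrt_mult)
  have "C * \<delta> powr \<epsilon> < norm (resid A (q ^ (N - 1)) g)"
    using False by (intro stop_index_test_fails) (auto simp: N_def)
  also have "\<dots> \<le> s * (norm y / 2) + \<delta>"
    using resid_perturbed_le[of "q ^ (N - 1)" A g y] q err by (simp add: s_def)
  finally have "\<delta> / s < ?B"
    using failed_test_ratio_bound[OF \<delta> s P] by blast
  have "\<delta> / sqrt (q ^ N) = (\<delta> / s) / sqrt q"
    by (simp add: sqrt_N divide_divide_eq_left mult.commute)
  also have "\<dots> \<le> (\<delta> + ?B) / sqrt q"
    using \<open>\<delta> / s < ?B\<close> \<delta> q by (intro divide_right_mono) auto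
  finally show ?thesis .
qed

text \<open>The bound of the main estimate vanishes as \<open>\<delta> \<rightarrow> 0\<^sup>+\<close>, because \<open>\<delta>\<^sup>1\<^sup>-\<^sup>\<epsilon> \<rightarrow> 0\<close> for \<open>\<epsilon> < 1\<close>.\<close>
lemma scale_bound_tendsto_zero:
  fixes \<epsilon> C K c :: real
  assumes "\<epsilon> < 1" "C \<noteq> 0"
  shows "((\<lambda>\<delta>. (\<delta> + K * (\<delta> powr (1 - \<epsilon>) / (C - \<delta> powr (1 - \<epsilon>)))) / c) \<longlongrightarrow> 0) (at_right 0)"
proof -
  have "((\<lambda>\<delta>. \<delta> powr (1 - \<epsilon>)) \<longlongrightarrow> 0) (at_right (0::real))"
    using assms(1) by (intro tendsto_zero_powrI[where b = "1 - \<epsilon>"] tendsto_ident_at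
        eventually_at_rightI[of 0 1]) auto
  then have "((\<lambda>\<delta>. \<delta> + K * (\<delta> powr (1 - \<epsilon>) / (C - \<delta> powr (1 - \<epsilon>))))
      \<longlongrightarrow> 0 + K * (0 / (C - 0))) (at_right 0)"
    using assms(2) by (intro tendsto_intros tendsto_ident_at) auto
  then show ?thesis
    by (intro tendsto_divide_zero) simp
qed

theorem lemma3p5:
  fixes A :: "real^'m^'m" and f y :: "real^'m"
    and fd :: "real \<Rightarrow> real^'m"
    and q C \<epsilon> :: real
  assumes "f \<in> range (\<lambda>x. A *v x)"
    and "A *v y = f" and "\<forall>z. A *v z = f \<longrightarrow> norm y \<le> norm z"
    and "0 < q" "q < 1" "C > 1" "0 < \<epsilon>" "\<epsilon> < 1"
    and "\<forall>\<delta>. 0 < \<delta> \<and> \<delta> < 1 \<longrightarrow> norm (fd \<delta> - f) \<le> \<delta>"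
  shows "((\<lambda>\<delta>. \<delta> / sqrt (q ^ stop_index A q C \<epsilon> \<delta> (fd \<delta>))) \<longlongrightarrow> 0) (at_right 0)"
proof -
  define U where
    "U \<delta> = (\<delta> + norm y / 2 * (\<delta> powr (1 - \<epsilon>) / (C - \<delta> powr (1 - \<epsilon>)))) / sqrt q" for \<delta>
  have small: "\<forall>\<^sub>F \<delta> in at_right 0. 0 < \<delta> \<and> \<delta> < (1::real)"
    using eventually_at_right_real[of 0 1] by simp
  have U_lim: "(U \<longlongrightarrow> 0) (at_right 0)"
    unfolding U_def using assms(6,8) by (intro scale_bound_tendsto_zero) auto
  have P_lt_C: "\<delta> powr (1 - \<epsilon>) < C" if "0 < \<delta>" "\<delta> < 1" for \<delta>
    using that assms(6,8) powr_less_mono2[of "1 - \<epsilon>" \<delta> 1] by simp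
  have bound: "\<forall>\<^sub>F \<delta> in at_right 0. \<delta> / sqrt (q ^ stop_index A q C \<epsilon> \<delta> (fd \<delta>)) \<le> U \<delta>"
    using small
  proof eventually_elim
    case (elim \<delta>)
    then have "norm (fd \<delta> - A *v y) \<le> \<delta>"
      using assms(2,9) by simp
    then show ?case
      unfolding U_def using elim assms(4,5) P_lt_C by (intro stop_index_scale_bound) auto
  qed
  have nonneg: "\<forall>\<^sub>F \<delta> in at_right 0. 0 \<le> \<delta> / sqrt (q ^ stop_index A q C \<epsilon> \<delta> (fd \<delta>))"
    using small by eventually_elim (use assms(4) in simp)
  show ?thesis
    by (rule real_tendsto_sandwich[OF nonneg bound tendsto_const U_lim])
qed

end
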